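(* Let $\mathcal{V}$ (respondents) and $\mathcal{X}$ (queries) be finite sets, let $k\ge 1$ and $T\ge 1$ be integers with $|\mathcal{X}|\ge T$, and let $f:2^{\mathcal{V}\times\mathcal{X}}\to\mathbb{R}_{\ge 0}$ satisfy $f(\emptyset)=0$ and be monotone and submodular: for all $W_1\subseteq W_2\subseteq \mathcal{V}\times\mathcal{X}$ and all $W\subseteq \mathcal{V}\times\mathcal{X}$, $f(W_2)\ge f(W_1)$ and $\Delta(W\mid W_1)\ge \Delta(W\mid W_2)$, where $\Delta(A\mid S)=f(S\cup A)-f(S)$. Define the joint greedy sequence $(R_1,x_1),\dots,(R_T,x_T)$ by $S_0=\emptyset$ and, for $t=1,\dots,T$, $$(R_t,x_t)\in\arg\max_{R\subseteq\mathcal{V},\,|R|\le k,\; x\in\mathcal{X}\setminus\{x_1,\dots,x_{t-1}\}}\Delta\big(R\times\{x\}\mid S_{t-1}\big),\qquad S_t=S_{t-1}\cup (R_t\times\{x_t\}),$$ (ties broken arbitrarily). Then for every sequence $(R_1^*,x_1^* ),\dots,(R_T^*,x_T^* )$ with $R_t^*\subseteq\mathcal{V}$, $|R_t^*|\le k$, and pairwise distinct queries $x_1^*,\dots,x_T^*\in\mathcal{X}$, setting $S_T^*=\bigcup_{t=1}^T R_t^*\times\{x_t^*\}$, we have $$f(S_T^* )\le \frac{2}{1-e^{-2}}\, f(S_T).$$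
   Context: A pair $(R,x)$ with $R\subseteq\mathcal{V}$, $x\in\mathcal{X}$ (a subset of respondents asked query $x$) is identified with the set $R\times\{x\}\subseteq\mathcal{V}\times\mathcal{X}$; a history of selected pairs is the union of these sets. $f$ is a utility function measuring information gained about a group's latent properties (e.g. expected information gain). *)

theory Defs
  imports Complex_Main
begin

definition Delta :: "('a set \<Rightarrow> real) \<Rightarrow> 'a set \<Rightarrow> 'a set \<Rightarrow> real" where
  "Delta f A S = f (S \<union> A) - f S"

definition hist :: "(nat \<Rightarrow> 'v set) \<Rightarrow> (nat \<Rightarrow> 'x) \<Rightarrow> nat \<Rightarrow> ('v \<times> 'x) set" where
  "hist R x t = (\<Union>s\<in>{1..t}. R s \<times> {x s})"

end

theory Submission
  imports Defs
begin

text \<open>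
  The joint greedy rule is in fact a 2-approximation, and \<open>2 \<le> 2 / (1 - e\<^sup>-\<^sup>2)\<close>.
  Match every optimal pair \<open>(R\<^sup>*\<^sub>j, x\<^sup>*\<^sub>j)\<close> with a distinct greedy step \<open>\<tau> j\<close> at which
  \<open>x\<^sup>*\<^sub>j\<close> was still available: the step that picked \<open>x\<^sup>*\<^sub>j\<close> if greedy ever did, and one
  of the remaining steps otherwise. By submodularity and the greedy choice, the gain of
  \<open>R\<^sup>*\<^sub>j \<times> {x\<^sup>*\<^sub>j}\<close> over \<open>S\<^sub>T\<close> is at most the greedy gain at step \<open>\<tau> j\<close>. Hence
  \<open>f S\<^sup>*\<^sub>T \<le> f S\<^sub>T + \<Sum>\<^sub>j \<Delta>(R\<^sup>*\<^sub>j \<times> {x\<^sup>*\<^sub>j} | S\<^sub>T) \<le> f S\<^sub>T + \<Sum>\<^sub>t \<Delta>(R\<^sub>t \<times> {x\<^sub>t} | S\<^sub>t\<^sub>-\<^sub>1) = 2 f S\<^sub>T\<close>.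
\<close>

lemma f_UN_telescope:
  fixes G :: "nat \<Rightarrow> 'a set"
  shows "f (\<Union>s\<in>{1..t}. G s) = f {} + (\<Sum>s = 1..t. Delta f (G s) (\<Union>r\<in>{1..s - 1}. G r))"
proof (induction t)
  case (Suc t)
  have "(\<Union>s\<in>{1..Suc t}. G s) = (\<Union>s\<in>{1..t}. G s) \<union> G (Suc t)"
    by (auto simp: atLeastAtMostSuc_conv)
  with Suc show ?case
    by (simp add: Delta_def)
qed simp

locale monotone_submodular =
  fixes U :: "'a set" and f :: "'a set \<Rightarrow> real"
  assumes mono: "\<And>W1 W2. W1 \<subseteq> W2 \<Longrightarrow> W2 \<subseteq> U \<Longrightarrow> f W1 \<le> f W2"
    and submod: "\<And>W1 W2 W. W1 \<subseteq> W2 \<Longrightarrow> W2 \<subseteq> U \<Longrightarrow> W \<subseteq> U \<Longrightarrow>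
                   Delta f W W2 \<le> Delta f W W1"
begin

lemma Delta_UN_le_sum:
  assumes "finite J" "S \<subseteq> U" "\<And>j. j \<in> J \<Longrightarrow> A j \<subseteq> U"
  shows "Delta f (\<Union>j\<in>J. A j) S \<le> (\<Sum>j\<in>J. Delta f (A j) S)"
  using assms
proof (induction J rule: finite_induct)
  case empty
  then show ?case by (simp add: Delta_def)
next
  case (insert a J)
  let ?B = "\<Union>j\<in>J. A j"
  have "Delta f (A a) (S \<union> ?B) \<le> Delta f (A a) S"
    using insert.prems by (intro submod) auto
  moreover have "S \<union> (\<Union>j\<in>insert a J. A j) = (S \<union> ?B) \<union> A a"
    by auto
  ultimately show ?case
    using insert by (simp add: Delta_def)
qed

lemma le_twice_greedy_if_matched:
  fixes G Opt :: "nat \<Rightarrow> 'a set"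
  assumes G_U: "(\<Union>s\<in>{1..T}. G s) \<subseteq> U"
    and Opt_U: "\<And>j. j \<in> {1..T} \<Longrightarrow> Opt j \<subseteq> U"
    and \<tau>: "bij_betw \<tau> {1..T} {1..T}"
    and gain_le: "\<And>j. j \<in> {1..T} \<Longrightarrow>
      Delta f (Opt j) (\<Union>s\<in>{1..\<tau> j - 1}. G s) \<le> Delta f (G (\<tau> j)) (\<Union>s\<in>{1..\<tau> j - 1}. G s)"
  shows "f (\<Union>j\<in>{1..T}. Opt j) \<le> 2 * f (\<Union>s\<in>{1..T}. G s) - f {}"
proof -
  let ?S = "\<Union>s\<in>{1..T}. G s"
  let ?g = "\<lambda>t. Delta f (G t) (\<Union>s\<in>{1..t - 1}. G s)"
  have gain_le_step: "Delta f (Opt j) ?S \<le> ?g (\<tau> j)" if j: "j \<in> {1..T}" for j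
  proof -
    have "\<tau> j \<in> {1..T}"
      using \<tau> j by (auto dest: bij_betwE)
    then have "(\<Union>s\<in>{1..\<tau> j - 1}. G s) \<subseteq> ?S"
      by (intro UN_mono) auto
    then have "Delta f (Opt j) ?S \<le> Delta f (Opt j) (\<Union>s\<in>{1..\<tau> j - 1}. G s)"
      using G_U Opt_U[OF j] by (intro submod)
    then show ?thesis
      using gain_le[OF j] by linarith
  qed
  have "?S \<union> (\<Union>j\<in>{1..T}. Opt j) \<subseteq> U"
    using G_U Opt_U by blast
  then have "f (\<Union>j\<in>{1..T}. Opt j) \<le> f (?S \<union> (\<Union>j\<in>{1..T}. Opt j))"
    by (intro mono) auto
  also have "\<dots> \<le> f ?S + (\<Sum>j = 1..T. Delta f (Opt j) ?S)"
    using Delta_UN_le_sum[of "{1..T}" ?S Opt] G_U Opt_U by (simp add: Delta_def)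
  also have "(\<Sum>j = 1..T. Delta f (Opt j) ?S) \<le> (\<Sum>j = 1..T. ?g (\<tau> j))"
    by (intro sum_mono gain_le_step)
  also have "(\<Sum>j = 1..T. ?g (\<tau> j)) = (\<Sum>t = 1..T. ?g t)"
    using sum.reindex_bij_betw[OF \<tau>] .
  also have "\<dots> = f ?S - f {}"
    using f_UN_telescope[of f G T] by simp
  finally show ?thesis by simp
qed

end

lemma ex_bij_extend:
  assumes "finite A" "B \<subseteq> A" "inj_on \<sigma> B" "\<sigma> ` B \<subseteq> A"
  shows "\<exists>\<tau>. bij_betw \<tau> A A \<and> (\<forall>j\<in>B. \<tau> j = \<sigma> j)"
proof -
  have "card (A - B) = card (A - \<sigma> ` B)"
    using assms by (simp add: card_Diff_subset card_image finite_subset)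
  then obtain h where h: "bij_betw h (A - B) (A - \<sigma> ` B)"
    using assms finite_same_card_bij by blast
  define \<tau> where "\<tau> j = (if j \<in> B then \<sigma> j else h j)" for j
  have "bij_betw \<tau> B (\<sigma> ` B)"
    using assms(3) by (auto simp: \<tau>_def bij_betw_def inj_on_def)
  moreover have "bij_betw \<tau> (A - B) (A - \<sigma> ` B)"
    using h by (rule bij_betw_cong[THEN iffD1, rotated]) (simp add: \<tau>_def)
  ultimately have "bij_betw \<tau> (B \<union> (A - B)) (\<sigma> ` B \<union> (A - \<sigma> ` B))"
    by (rule bij_betw_combine) blast
  then have "bij_betw \<tau> A A"
    using assms by (simp add: Un_absorb1)
  then show ?thesis
    by (auto simp: \<tau>_def)
qed

lemma inj_on_if_not_repeated:
  fixes T :: nat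
  assumes "\<And>t. t \<in> {1..T} \<Longrightarrow> x t \<notin> x ` {1..<t}"
  shows "inj_on x {1..T}"
proof (rule linorder_inj_onI')
  fix i j :: nat
  assume "i \<in> {1..T}" "j \<in> {1..T}" "i < j"
  then have "x i \<in> x ` {1..<j}"
    by simp
  then show "x i \<noteq> x j"
    using assms[of j] \<open>j \<in> {1..T}\<close> by auto
qed

lemma ex_bij_not_chosen_before:
  fixes T :: nat
  assumes x: "inj_on x {1..T}" and xs: "inj_on xs {1..T}"
  shows "\<exists>\<tau>. bij_betw \<tau> {1..T} {1..T} \<and> (\<forall>j\<in>{1..T}. xs j \<notin> x ` {1..<\<tau> j})"
proof -
  define B where "B = {j \<in> {1..T}. xs j \<in> x ` {1..T}}"
  define \<sigma> where "\<sigma> j = inv_into {1..T} x (xs j)" for j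
  have \<sigma>: "\<sigma> j \<in> {1..T}" "x (\<sigma> j) = xs j" if "j \<in> B" for j
  proof -
    have "xs j \<in> x ` {1..T}"
      using that by (simp add: B_def)
    then show "\<sigma> j \<in> {1..T}" "x (\<sigma> j) = xs j"
      unfolding \<sigma>_def by (rule inv_into_into, rule f_inv_into_f)
  qed
  have \<sigma>_inj: "inj_on \<sigma> B"
  proof (rule inj_onI)
    fix a b assume "a \<in> B" "b \<in> B" "\<sigma> a = \<sigma> b"
    then have "xs a = xs b"
      using \<sigma>(2) by metis
    then show "a = b"
      using xs \<open>a \<in> B\<close> \<open>b \<in> B\<close> by (auto simp: B_def dest: inj_onD)
  qed
  have B_sub: "B \<subseteq> {1..T}" and \<sigma>_sub: "\<sigma> ` B \<subseteq> {1..T}"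
    using \<sigma>(1) by (auto simp: B_def)
  obtain \<tau> where \<tau>: "bij_betw \<tau> {1..T} {1..T}" and \<tau>\<sigma>: "\<forall>j\<in>B. \<tau> j = \<sigma> j"
    using ex_bij_extend[OF finite_atLeastAtMost B_sub \<sigma>_inj \<sigma>_sub] by blast
  have "xs j \<notin> x ` {1..<\<tau> j}" if j: "j \<in> {1..T}" for j
  proof (cases "j \<in> B")
    case True
    show ?thesis
    proof
      assume "xs j \<in> x ` {1..<\<tau> j}"
      then obtain s where s: "s \<in> {1..<\<sigma> j}" "x s = x (\<sigma> j)"
        using \<tau>\<sigma> \<sigma>[OF True] True by auto
      then have "s = \<sigma> j"
        using \<sigma>(1)[OF True] by (intro inj_onD[OF x]) auto
      with s show False by simp
    qed
  next
    case False
    have "\<tau> j \<le> T"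
      using bij_betwE[OF \<tau>] j by auto
    then have "{1..<\<tau> j} \<subseteq> {1..T}"
      by auto
    with False j show ?thesis
      by (auto simp: B_def)
  qed
  with \<tau> show ?thesis by blast
qed

lemma two_le_two_div_one_minus_exp_neg2: "2 \<le> 2 / (1 - exp (-2::real))"
proof -
  have "0 < exp (-2::real)" "exp (-2::real) < 1"
    by simp_all
  then show ?thesis
    by (simp add: field_simps)
qed

theorem theorem1:
  fixes V :: "'v set" and X :: "'x set" and k T :: nat
    and f :: "('v \<times> 'x) set \<Rightarrow> real"
    and R :: "nat \<Rightarrow> 'v set" and x :: "nat \<Rightarrow> 'x"
    and Rs :: "nat \<Rightarrow> 'v set" and xs :: "nat \<Rightarrow> 'x"
  assumes finV: "finite V" and finX: "finite X"
    and k: "k \<ge> 1" and T: "T \<ge> 1" and XT: "card X \<ge> T"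
    and nonneg: "\<And>W. W \<subseteq> V \<times> X \<Longrightarrow> f W \<ge> 0"
    and empty: "f {} = 0"
    and mono: "\<And>W1 W2. W1 \<subseteq> W2 \<Longrightarrow> W2 \<subseteq> V \<times> X \<Longrightarrow> f W1 \<le> f W2"
    and submod: "\<And>W1 W2 W. W1 \<subseteq> W2 \<Longrightarrow> W2 \<subseteq> V \<times> X \<Longrightarrow> W \<subseteq> V \<times> X \<Longrightarrow>
                   Delta f W W1 \<ge> Delta f W W2"
    and greedy_feas: "\<And>t. t \<in> {1..T} \<Longrightarrow>
          R t \<subseteq> V \<and> card (R t) \<le> k \<and> x t \<in> X - x ` {1..<t}"
    and greedy_max: "\<And>t R' x'. t \<in> {1..T} \<Longrightarrow> R' \<subseteq> V \<Longrightarrow> card R' \<le> k \<Longrightarrow>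
          x' \<in> X - x ` {1..<t} \<Longrightarrow>
          Delta f (R' \<times> {x'}) (hist R x (t - 1)) \<le> Delta f (R t \<times> {x t}) (hist R x (t - 1))"
    and opt_feas: "\<And>t. t \<in> {1..T} \<Longrightarrow> Rs t \<subseteq> V \<and> card (Rs t) \<le> k \<and> xs t \<in> X"
    and opt_dist: "inj_on xs {1..T}"
  shows "f (hist Rs xs T) \<le> 2 / (1 - exp (-2)) * f (hist R x T)"
proof -
  interpret monotone_submodular "V \<times> X" f
    using mono submod by unfold_locales
  have hist_VX: "hist R x T \<subseteq> V \<times> X"
    using greedy_feas by (force simp: hist_def)
  obtain \<tau> where \<tau>: "bij_betw \<tau> {1..T} {1..T}"
    and fresh: "\<forall>j\<in>{1..T}. xs j \<notin> x ` {1..<\<tau> j}"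
    using ex_bij_not_chosen_before[OF inj_on_if_not_repeated opt_dist] greedy_feas by blast
  have "f (hist Rs xs T) \<le> 2 * f (hist R x T) - f {}"
    unfolding hist_def
  proof (rule le_twice_greedy_if_matched[OF hist_VX[unfolded hist_def] _ \<tau>])
    fix j assume j: "j \<in> {1..T}"
    show "Rs j \<times> {xs j} \<subseteq> V \<times> X"
      using opt_feas[OF j] by auto
    have "\<tau> j \<in> {1..T}"
      using \<tau> j by (auto dest: bij_betwE)
    then show "Delta f (Rs j \<times> {xs j}) (\<Union>s\<in>{1..\<tau> j - 1}. R s \<times> {x s})
        \<le> Delta f (R (\<tau> j) \<times> {x (\<tau> j)}) (\<Union>s\<in>{1..\<tau> j - 1}. R s \<times> {x s})"
      using greedy_max[of "\<tau> j" "Rs j" "xs j"] opt_feas[OF j] fresh j by (auto simp: hist_def)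
  qed
  also have "\<dots> = 2 * f (hist R x T)"
    using empty by simp
  also have "\<dots> \<le> 2 / (1 - exp (-2)) * f (hist R x T)"
    using two_le_two_div_one_minus_exp_neg2 nonneg[OF hist_VX] by (rule mult_right_mono)
  finally show ?thesis .
qed

end
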